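(* Let $\mathcal P$ be a finite set with $|\mathcal P|=n$, $\kappa\in(0,1)$, $\lambda>0$, $\ell_1,\ell_2,\dots:\mathcal P\to[0,1]$, $\mu_1(i)=\kappa$ for all $i$, $\Gamma$ the set of $\kappa$-dense measures on $\mathcal P$, and for $t\ge1$, $\mu_{t+1}=\Pi_\Gamma\tilde\mu_{t+1}$ with $\tilde\mu_{t+1}(i)=e^{-\lambda\sum_{s=1}^t\ell_s(i)}\mu_1(i)$. Writing $M(\hat\mu,Q_t)=\mathbb{E}_{i\sim\hat\mu}[\ell_t(i)]$, for every $T$ and every $\mu\in\Gamma$, \[ \sum_{t=1}^TM(\hat\mu_{t+1},Q_t)\le\sum_{t=1}^TM(\hat\mu,Q_t)+\frac{\mathrm{KL}(\mu\|\mu_1)}{\lambda\kappa n}. \]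
   Context: A measure on $\mathcal P$ is $\mu:\mathcal P\to[0,1]$; $|\mu|=\sum_i\mu(i)$; $\kappa$-dense means $|\mu|/n\ge\kappa$; $\hat\mu=\mu/|\mu|$. $\mathrm{KL}(\mu_1\|\mu_2)=\sum_i\mu_1(i)\log(\mu_1(i)/\mu_2(i))+\mu_2(i)-\mu_1(i)$. $\Pi_\Gamma\tilde\mu=\arg\min_{\mu\in\Gamma}\mathrm{KL}(\mu\|\tilde\mu)$. $Q_t$ is the column strategy of round $t$, inducing loss vector $\ell_t$. *)

theory Defs
  imports Complex_Main
begin

text \<open>Measures on a finite ground set P are functions into [0,1]; only values on P matter.\<close>

definition is_measure :: "'a set \<Rightarrow> ('a \<Rightarrow> real) \<Rightarrow> bool" where
  "is_measure P \<mu> \<longleftrightarrow> (\<forall>i\<in>P. 0 \<le> \<mu> i \<and> \<mu> i \<le> 1)"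

definition mass :: "'a set \<Rightarrow> ('a \<Rightarrow> real) \<Rightarrow> real" where
  "mass P \<mu> = (\<Sum>i\<in>P. \<mu> i)"

definition dense_measures :: "'a set \<Rightarrow> real \<Rightarrow> ('a \<Rightarrow> real) set" where
  "dense_measures P \<kappa> = {\<mu>. is_measure P \<mu> \<and> mass P \<mu> / real (card P) \<ge> \<kappa>}"

definition normalize :: "'a set \<Rightarrow> ('a \<Rightarrow> real) \<Rightarrow> 'a \<Rightarrow> real" where
  "normalize P \<mu> = (\<lambda>i. \<mu> i / mass P \<mu>)"

definition KL :: "'a set \<Rightarrow> ('a \<Rightarrow> real) \<Rightarrow> ('a \<Rightarrow> real) \<Rightarrow> real" where
  "KL P \<mu>1 \<mu>2 = (\<Sum>i\<in>P. \<mu>1 i * ln (\<mu>1 i / \<mu>2 i) + \<mu>2 i - \<mu>1 i)"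

definition is_KL_proj :: "'a set \<Rightarrow> ('a \<Rightarrow> real) set \<Rightarrow> ('a \<Rightarrow> real) \<Rightarrow> ('a \<Rightarrow> real) \<Rightarrow> bool" where
  "is_KL_proj P \<Gamma> \<mu>' \<nu> \<longleftrightarrow> \<nu> \<in> \<Gamma> \<and> (\<forall>\<rho>\<in>\<Gamma>. KL P \<nu> \<mu>' \<le> KL P \<rho> \<mu>')"

definition expected_loss :: "'a set \<Rightarrow> ('a \<Rightarrow> real) \<Rightarrow> ('a \<Rightarrow> real) \<Rightarrow> real" where
  "expected_loss P \<mu>hat loss = (\<Sum>i\<in>P. \<mu>hat i * loss i)"

end

theory Submission
  imports Defs
begin

text \<open>
  Exponential weights followed by a KL projection onto \<Gamma> is follow-the-regularised-leader
  with regulariser KL(. || \<mu>s 1) / lam, because the exponential tilt shifts the divergence by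
  lam times the cumulative linear loss. The be-the-leader argument then bounds the cumulative
  unnormalised loss of the iterates \<mu>s (t + 1) by that of any comparator u \<in> \<Gamma> plus
  KL(u || \<mu>s 1) / lam. Every iterate has mass at least \<kappa>n, which turns the left side into
  normalised losses. On the right, \<mu> is replaced by its rescaling u of mass exactly \<kappa>n:
  u has the same normalisation as \<mu>, and by the log-sum inequality KL(u || \<mu>s 1) does not
  exceed KL(\<mu> || \<mu>s 1).
\<close>

lemma diff_le_mult_ln_div:
  fixes u w :: real
  assumes "0 \<le> u" "0 < w"
  shows "u - w \<le> u * ln (u / w)"
proof (cases "u = 0")
  case True
  then show ?thesis using assms by simp
next
  case False
  with assms have "0 < u" by simp
  have "ln (w / u) \<le> w / u - 1"
    using \<open>0 < u\<close> assms by (intro ln_le_minus_one) simp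
  also have "ln (w / u) = - ln (u / w)"
    using \<open>0 < u\<close> assms by (simp add: ln_div)
  finally have "u * (1 - w / u) \<le> u * ln (u / w)"
    using \<open>0 < u\<close> by (intro mult_left_mono) auto
  moreover have "u * (1 - w / u) = u - w"
    using \<open>0 < u\<close> by (simp add: field_simps)
  ultimately show ?thesis by simp
qed

lemma KL_nonneg:
  assumes "\<forall>i\<in>P. 0 \<le> u i" "\<forall>i\<in>P. 0 < w i"
  shows "0 \<le> KL P u w"
  unfolding KL_def using assms diff_le_mult_ln_div by (intro sum_nonneg) fastforce

text \<open>No positivity is needed: where w i = 0 the summand is 0 * ln (0 / 0) = 0.\<close>

lemma KL_self: "KL P w w = 0"
  unfolding KL_def by (intro sum.neutral) simp

lemma log_sum_inequality:
  assumes "finite P" "\<forall>i\<in>P. 0 \<le> u i" "\<forall>i\<in>P. 0 < w i" "0 < mass P u"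
  shows "mass P u * ln (mass P u / mass P w) \<le> (\<Sum>i\<in>P. u i * ln (u i / w i))"
proof -
  define q where "q = mass P u / mass P w"
  have "P \<noteq> {}"
    using \<open>0 < mass P u\<close> by (auto simp: mass_def)
  then have "0 < mass P w"
    using assms(1,3) by (simp add: mass_def sum_pos)
  then have "0 < q"
    using assms(4) by (simp add: q_def)
  have split: "u i * ln (u i / w i) = u i * ln (u i / (q * w i)) + u i * ln q" if "i \<in> P" for i
  proof (cases "u i = 0")
    case False
    then have "0 < u i" using assms(2) that by force
    moreover have "0 < w i" using assms(3) that by blast
    ultimately show ?thesis
      using \<open>0 < q\<close> by (simp add: ln_div ln_mult algebra_simps)
  qed simp
  have "(\<Sum>i\<in>P. u i - q * w i) \<le> (\<Sum>i\<in>P. u i * ln (u i / (q * w i)))"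
    using assms(2,3) \<open>0 < q\<close> by (intro sum_mono diff_le_mult_ln_div) auto
  moreover have "(\<Sum>i\<in>P. u i - q * w i) = mass P u - q * mass P w"
    by (simp add: mass_def sum_subtractf sum_distrib_left)
  moreover have "mass P u - q * mass P w = 0"
    using \<open>0 < mass P w\<close> by (simp add: q_def)
  ultimately show ?thesis
    using split by (simp add: sum.distrib sum_distrib_right[symmetric] q_def mass_def)
qed

lemma KL_rescale_to_reference_mass_le:
  assumes "finite P" "\<forall>i\<in>P. 0 \<le> u i" "\<forall>i\<in>P. 0 < w i" "P \<noteq> {}" "mass P w \<le> mass P u"
  shows "KL P (\<lambda>i. mass P w / mass P u * u i) w \<le> KL P u w"
proof -
  define m W where "m = mass P u" and "W = mass P w"
  define c A where "c = W / m" and "A = (\<Sum>i\<in>P. u i * ln (u i / w i))"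
  have "0 < W"
    using assms(1,3,4) by (simp add: W_def mass_def sum_pos)
  with assms(5) have "0 < m" "0 < c" "c \<le> 1" "c * m = W"
    by (auto simp: c_def m_def W_def)
  have scaled_term: "c * u i * ln (c * u i / w i) = c * (u i * ln (u i / w i)) + ln c * c * u i"
    if "i \<in> P" for i
  proof (cases "u i = 0")
    case False
    then have "0 < u i" using assms(2) that by force
    moreover have "0 < w i" using assms(3) that by blast
    ultimately show ?thesis
      using \<open>0 < c\<close> by (simp add: ln_div ln_mult algebra_simps)
  qed simp
  have "KL P (\<lambda>i. c * u i) w = c * A + ln c * c * m + W - c * m"
    unfolding KL_def using scaled_term
    by (simp add: sum.distrib sum_subtractf sum_distrib_left A_def m_def W_def mass_def)
  also have "\<dots> = c * A + W * ln c"
    using \<open>c * m = W\<close> by (simp add: algebra_simps)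
  finally have scaled: "KL P (\<lambda>i. c * u i) w = c * A + W * ln c" .
  have unscaled: "KL P u w = A + W - m"
    unfolding KL_def by (simp add: sum.distrib sum_subtractf A_def m_def W_def mass_def)
  have "m * ln (m / W) \<le> A"
    using log_sum_inequality[OF assms(1-3)] \<open>0 < m\<close> by (simp add: A_def m_def W_def)
  moreover have "ln (m / W) = - ln c"
    using \<open>0 < m\<close> \<open>0 < W\<close> by (simp add: c_def ln_div)
  ultimately have "- m * ln c \<le> A" by simp
  then have "(1 - c) * (- m * ln c) \<le> (1 - c) * A"
    using \<open>c \<le> 1\<close> by (intro mult_left_mono) auto
  moreover have "m * ln c \<le> m * (c - 1)"
    using \<open>0 < m\<close> \<open>0 < c\<close> by (intro mult_left_mono ln_le_minus_one) auto
  ultimately have "c * A + c * m * ln c \<le> A + c * m - m"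
    by (simp add: algebra_simps)
  then have "c * A + W * ln c \<le> A + W - m"
    using \<open>c * m = W\<close> by simp
  then show ?thesis
    using scaled unscaled by (simp add: c_def m_def W_def)
qed

lemma KL_exp_tilt:
  assumes "finite P" "\<forall>i\<in>P. 0 \<le> u i" "\<forall>i\<in>P. 0 < w i"
  shows "KL P u (\<lambda>i. exp (- a i) * w i)
           = KL P u w + (\<Sum>i\<in>P. u i * a i) + (\<Sum>i\<in>P. exp (- a i) * w i - w i)"
proof -
  have "u i * ln (u i / (exp (- a i) * w i)) = u i * ln (u i / w i) + u i * a i" if "i \<in> P" for i
  proof (cases "u i = 0")
    case False
    then have "0 < u i" using assms(2) that by force
    moreover have "0 < w i" using assms(3) that by blast
    ultimately show ?thesis
      by (simp add: ln_div ln_mult algebra_simps)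
  qed simp
  then show ?thesis
    unfolding KL_def by (simp add: sum.distrib[symmetric] algebra_simps cong: sum.cong)
qed

text \<open>Tilting the reference by exp (- lam * L) changes KL P v (reference) by lam times the
  linear loss of v plus a constant independent of v, so the KL projection of the tilted prior
  minimises the KL-regularised linear loss.\<close>

lemma is_KL_proj_exp_tilt_le:
  assumes "finite P" "0 < lam" "\<forall>i\<in>P. 0 < w i" "\<forall>v\<in>\<Gamma>. \<forall>i\<in>P. 0 \<le> v i"
    and "is_KL_proj P \<Gamma> (\<lambda>i. exp (- lam * L i) * w i) \<nu>" "u \<in> \<Gamma>"
  shows "(\<Sum>i\<in>P. \<nu> i * L i) + KL P \<nu> w / lam \<le> (\<Sum>i\<in>P. u i * L i) + KL P u w / lam"
proof -
  have tilt: "KL P v (\<lambda>i. exp (- lam * L i) * w i)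
      = lam * ((\<Sum>i\<in>P. v i * L i) + KL P v w / lam) + (\<Sum>i\<in>P. exp (- (lam * L i)) * w i - w i)"
    if "v \<in> \<Gamma>" for v
    using KL_exp_tilt[OF assms(1) _ assms(3), of v "\<lambda>i. lam * L i"] assms(2,4) that
    by (simp add: sum_distrib_left algebra_simps)
  have "\<nu> \<in> \<Gamma>" "KL P \<nu> (\<lambda>i. exp (- lam * L i) * w i) \<le> KL P u (\<lambda>i. exp (- lam * L i) * w i)"
    using assms(5,6) by (auto simp: is_KL_proj_def)
  then show ?thesis
    using tilt[of \<nu>] tilt[OF assms(6)] assms(2) by simp
qed

lemma be_the_leader:
  fixes f :: "nat \<Rightarrow> 'b \<Rightarrow> real" and R :: "'b \<Rightarrow> real" and x :: "nat \<Rightarrow> 'b"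
  assumes leader: "\<And>t v. v \<in> \<Gamma> \<Longrightarrow>
      (\<Sum>s=1..t. f s (x (Suc t))) + R (x (Suc t)) \<le> (\<Sum>s=1..t. f s v) + R v"
    and feasible: "\<And>t. t \<ge> 1 \<Longrightarrow> x (Suc t) \<in> \<Gamma>"
    and "u \<in> \<Gamma>"
  shows "(\<Sum>t=1..T. f t (x (Suc t))) \<le> (\<Sum>t=1..T. f t u) + R u - R (x 1)"
proof -
  have "(\<Sum>t=1..T. f t (x (Suc t))) + R (x 1) \<le> (\<Sum>t=1..T. f t (x (Suc T))) + R (x (Suc T))"
  proof (induction T)
    case (Suc T)
    let ?y = "x (Suc (Suc T))"
    have "(\<Sum>t=1..Suc T. f t (x (Suc t))) + R (x 1)
        = (\<Sum>t=1..T. f t (x (Suc t))) + R (x 1) + f (Suc T) ?y"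
      by simp
    also have "\<dots> \<le> (\<Sum>t=1..T. f t (x (Suc T))) + R (x (Suc T)) + f (Suc T) ?y"
      using Suc.IH by simp
    also have "\<dots> \<le> (\<Sum>t=1..T. f t ?y) + R ?y + f (Suc T) ?y"
      using leader[OF feasible] by simp
    also have "\<dots> = (\<Sum>t=1..Suc T. f t ?y) + R ?y"
      by simp
    finally show ?case .
  qed simp
  also have "\<dots> \<le> (\<Sum>t=1..T. f t u) + R u"
    using leader[OF \<open>u \<in> \<Gamma>\<close>] .
  finally show ?thesis by simp
qed

lemma exp_weights_be_the_leader:
  fixes loss x :: "nat \<Rightarrow> 'a \<Rightarrow> real"
  assumes "finite P" "0 < lam" "\<forall>i\<in>P. 0 < x 1 i" "\<forall>v\<in>\<Gamma>. \<forall>i\<in>P. 0 \<le> v i"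
    and proj: "\<And>t. t \<ge> 1 \<Longrightarrow>
      is_KL_proj P \<Gamma> (\<lambda>i. exp (- lam * (\<Sum>s=1..t. loss s i)) * x 1 i) (x (Suc t))"
    and "u \<in> \<Gamma>"
  shows "(\<Sum>t=1..T. \<Sum>i\<in>P. x (Suc t) i * loss t i)
           \<le> (\<Sum>t=1..T. \<Sum>i\<in>P. u i * loss t i) + KL P u (x 1) / lam"
proof -
  define f where "f t v = (\<Sum>i\<in>P. v i * loss t i)" for t v
  define R where "R v = KL P v (x 1) / lam" for v
  have cumulative: "(\<Sum>s=1..t. f s v) = (\<Sum>i\<in>P. v i * (\<Sum>s=1..t. loss s i))" for t v
    unfolding f_def sum_distrib_left by (rule sum.swap)
  have leader: "(\<Sum>s=1..t. f s (x (Suc t))) + R (x (Suc t)) \<le> (\<Sum>s=1..t. f s v) + R v"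
    if "v \<in> \<Gamma>" for t v
  proof (cases "t = 0")
    case True
    then show ?thesis
      using KL_nonneg[of P v "x 1"] assms(2-4) that by (simp add: R_def KL_self)
  next
    case False
    then show ?thesis
      unfolding cumulative R_def using is_KL_proj_exp_tilt_le[OF assms(1-4) proj that] by simp
  qed
  have "(\<Sum>t=1..T. f t (x (Suc t))) \<le> (\<Sum>t=1..T. f t u) + R u - R (x 1)"
    using be_the_leader[of \<Gamma> f x R, OF leader] proj assms(6) by (auto simp: is_KL_proj_def)
  then show ?thesis
    by (simp add: f_def R_def KL_self)
qed

lemma normalize_scale:
  assumes "c \<noteq> 0"
  shows "normalize P (\<lambda>i. c * \<mu> i) = normalize P \<mu>"
  using assms by (simp add: normalize_def mass_def sum_distrib_left[symmetric])

lemma expected_loss_normalize: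
  "expected_loss P (normalize P \<mu>) l = (\<Sum>i\<in>P. \<mu> i * l i) / mass P \<mu>"
  by (simp add: expected_loss_def normalize_def sum_divide_distrib)

lemma expected_loss_normalize_le:
  assumes "\<forall>i\<in>P. 0 \<le> \<mu> i \<and> 0 \<le> l i" "0 < k" "k \<le> mass P \<mu>"
  shows "expected_loss P (normalize P \<mu>) l \<le> (\<Sum>i\<in>P. \<mu> i * l i) / k"
  unfolding expected_loss_normalize
  using assms by (intro divide_left_mono sum_nonneg mult_nonneg_nonneg) auto

lemma dense_measures_mass_ge:
  assumes "\<mu> \<in> dense_measures P \<kappa>" "finite P" "P \<noteq> {}"
  shows "\<kappa> * card P \<le> mass P \<mu>"
  using assms by (simp add: dense_measures_def field_simps card_gt_0_iff)

lemma dense_measures_rescale: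
  assumes "\<mu> \<in> dense_measures P \<kappa>" "finite P" "P \<noteq> {}" "0 < \<kappa>"
  defines "u \<equiv> \<lambda>i. \<kappa> * card P / mass P \<mu> * \<mu> i"
  shows "u \<in> dense_measures P \<kappa>" "mass P u = \<kappa> * card P" "normalize P u = normalize P \<mu>"
    and "\<forall>i\<in>P. 0 < w i \<Longrightarrow> mass P w = \<kappa> * card P \<Longrightarrow> KL P u w \<le> KL P \<mu> w"
proof -
  define c where "c = \<kappa> * card P / mass P \<mu>"
  have "\<kappa> * card P \<le> mass P \<mu>" "0 < \<kappa> * card P"
    using dense_measures_mass_ge[OF assms(1-3)] assms(2-4) by (auto simp: card_gt_0_iff)
  then have "0 < c" "c \<le> 1"
    by (auto simp: c_def)
  have "mass P u = c * mass P \<mu>"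
    by (simp add: u_def c_def mass_def sum_distrib_left)
  then show mass: "mass P u = \<kappa> * card P"
    using \<open>0 < \<kappa> * card P\<close> \<open>\<kappa> * card P \<le> mass P \<mu>\<close> by (simp add: c_def)
  have "is_measure P u"
    using assms(1) \<open>0 < c\<close> \<open>c \<le> 1\<close>
    by (auto simp: u_def c_def[symmetric] dense_measures_def is_measure_def mult_le_one)
  then show "u \<in> dense_measures P \<kappa>"
    using mass assms(2,3) by (simp add: dense_measures_def card_gt_0_iff)
  show "normalize P u = normalize P \<mu>"
    unfolding u_def c_def[symmetric] using \<open>0 < c\<close> by (intro normalize_scale) simp
  assume "\<forall>i\<in>P. 0 < w i" "mass P w = \<kappa> * card P"
  then show "KL P u w \<le> KL P \<mu> w"
    using KL_rescale_to_reference_mass_le[OF assms(2) _ _ assms(3), of \<mu> w] assms(1)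
      \<open>\<kappa> * card P \<le> mass P \<mu>\<close>
    by (simp add: u_def dense_measures_def is_measure_def)
qed

theorem mainTheorem8:
  fixes P :: "'a set" and n :: nat and \<kappa> lam :: real
    and loss :: "nat \<Rightarrow> 'a \<Rightarrow> real" and \<mu>s :: "nat \<Rightarrow> 'a \<Rightarrow> real"
  assumes finP: "finite P" and neP: "P \<noteq> {}" and n_def: "card P = n"
    and kappa: "0 < \<kappa>" "\<kappa> < 1" and lam_pos: "lam > 0"
    and loss_bnd: "\<And>t i. t \<ge> 1 \<Longrightarrow> i \<in> P \<Longrightarrow> 0 \<le> loss t i \<and> loss t i \<le> 1"
    and init: "\<And>i. i \<in> P \<Longrightarrow> \<mu>s 1 i = \<kappa>"
    and step: "\<And>t. t \<ge> 1 \<Longrightarrow> is_KL_proj P (dense_measures P \<kappa>)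
                 (\<lambda>i. exp (- lam * (\<Sum>s=1..t. loss s i)) * \<mu>s 1 i) (\<mu>s (Suc t))"
  shows "\<forall>T::nat. \<forall>\<mu> \<in> dense_measures P \<kappa>.
     (\<Sum>t=1..T. expected_loss P (normalize P (\<mu>s (Suc t))) (loss t))
       \<le> (\<Sum>t=1..T. expected_loss P (normalize P \<mu>) (loss t))
          + KL P \<mu> (\<mu>s 1) / (lam * \<kappa> * real n)"
proof (intro allI ballI)
  fix T :: nat and \<mu> assume \<mu>: "\<mu> \<in> dense_measures P \<kappa>"
  define k where "k = \<kappa> * card P"
  define u where "u = (\<lambda>i. k / mass P \<mu> * \<mu> i)"
  have "0 < k" "mass P (\<mu>s 1) = k"
    using kappa finP neP init by (simp_all add: k_def card_gt_0_iff mass_def)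
  have nonneg: "\<forall>v\<in>dense_measures P \<kappa>. \<forall>i\<in>P. 0 \<le> v i"
    by (simp add: dense_measures_def is_measure_def)
  have u: "u \<in> dense_measures P \<kappa>" "mass P u = k" "normalize P u = normalize P \<mu>"
    "KL P u (\<mu>s 1) \<le> KL P \<mu> (\<mu>s 1)"
    using dense_measures_rescale(1-3)[OF \<mu> finP neP kappa(1)]
      dense_measures_rescale(4)[OF \<mu> finP neP kappa(1), of "\<mu>s 1"] init kappa(1)
      \<open>mass P (\<mu>s 1) = k\<close>
    by (simp_all add: u_def k_def)
  have "(\<Sum>t=1..T. expected_loss P (normalize P (\<mu>s (Suc t))) (loss t))
      \<le> (\<Sum>t=1..T. (\<Sum>i\<in>P. \<mu>s (Suc t) i * loss t i) / k)"
    using step nonneg loss_bnd dense_measures_mass_ge[OF _ finP neP] \<open>0 < k\<close>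
    by (intro sum_mono expected_loss_normalize_le) (auto simp: is_KL_proj_def k_def)
  also have "\<dots> \<le> ((\<Sum>t=1..T. \<Sum>i\<in>P. u i * loss t i) + KL P u (\<mu>s 1) / lam) / k"
    using exp_weights_be_the_leader[OF finP lam_pos _ nonneg step u(1)] init kappa \<open>0 < k\<close>
    by (simp add: sum_divide_distrib[symmetric] divide_right_mono)
  also have "\<dots> = (\<Sum>t=1..T. expected_loss P (normalize P u) (loss t)) + KL P u (\<mu>s 1) / (lam * k)"
    by (simp add: expected_loss_normalize u(2) add_divide_distrib sum_divide_distrib)
  also have "\<dots> \<le> (\<Sum>t=1..T. expected_loss P (normalize P \<mu>) (loss t)) + KL P \<mu> (\<mu>s 1) / (lam * k)"
    using u(3,4) lam_pos \<open>0 < k\<close> by (simp add: divide_right_mono)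
  finally show "(\<Sum>t=1..T. expected_loss P (normalize P (\<mu>s (Suc t))) (loss t))
      \<le> (\<Sum>t=1..T. expected_loss P (normalize P \<mu>) (loss t)) + KL P \<mu> (\<mu>s 1) / (lam * \<kappa> * real n)"
    by (simp add: k_def n_def mult.assoc)
qed

end
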